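(* Let $T$ be a regular $n$-IET, $n\ge1$, over the ordered alphabet $\mathcal{A}$ with permutation $\pi\in S_{\mathcal{A}}$, and let $\mathcal{L}(T)$ be its language. Then every return word in $\mathcal{L}(T)$ is $\pi$-clustering for $\mathcal{A}$; i.e., for every $u\in\mathcal{L}(T)$ and every $w\in\mathcal{R}(u)$, $w$ is $\pi$-clustering.
   Context: An $n$-IET $T$ on $I=[\ell,r)$ over $\mathcal{A}=\{a_1<\dots<a_n\}$ is given by a partition of $I$ into left-closed right-open intervals $(I_a)_{a\in\mathcal{A}}$ of positive length ordered left to right by the order of $\mathcal{A}$, and a permutation $\pi$ of $\mathcal{A}$; $T(x)=x+\tau_a$ on $I_a$ with $\tau_a=\sum_{b:\,\pi^{-1}(b)<\pi^{-1}(a)}|I_b|-\sum_{b<a}|I_b|$. The set of formal discontinuities is $D(T)=\{\ell+\sum_{b<a}|I_b|: a\in\mathcal{A}\}\setminus\{\ell\}$; $T$ is regular (Keane condition) if the orbits $\{T^m(x):m\in\mathbb{Z}\}$ of the points of $D(T)$ are infinite and pairwise disjoint. Trajectories $\Omega_T(x)=w_0w_1\cdots$ with $w_i=a$ iff $T^i(x)\in I_a$; $\mathcal{L}(T)$ is the set of finite factors of all trajectories. Return words: $\mathcal{R}(u)=\{w\in\mathcal{A}^*: wu\in(\mathcal{L}(T)\cap u\mathcal{A}^* )\setminus\mathcal{A}^+u\mathcal{A}^+\}$. For a word $v$ of length $m$, $\mathrm{bwt}_{\mathcal{A}}(v)$ is the word of last letters of the $m$ cyclic rotations of $v$ sorted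 lexicographically w.r.t. the order of $\mathcal{A}$; $v$ is $\pi$-clustering for $\mathcal{A}$ if $\mathrm{bwt}_{\mathcal{A}}(v)=\pi(a_1)^{k_1}\cdots\pi(a_n)^{k_n}$ with $k_i=|v|_{\pi(a_i)}$. *)

theory Defs
  imports Complex_Main "HOL-Library.List_Lexorder"
begin

text \<open>An IET over the finite linearly ordered alphabet 'a (the letters a_1 < ... < a_n
 are the elements of the type, n = CARD('a) \<ge> 1), on I = [l, l + sum of lengths),
 with interval lengths lam a > 0 and permutation perm.\<close>

definition iet_start :: "real \<Rightarrow> ('a::{finite,linorder} \<Rightarrow> real) \<Rightarrow> 'a \<Rightarrow> real" where
  "iet_start l lam a = l + (\<Sum>b\<in>{b. b < a}. lam b)"

definition iet_right :: "real \<Rightarrow> ('a::{finite,linorder} \<Rightarrow> real) \<Rightarrow> real" where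
  "iet_right l lam = l + (\<Sum>b\<in>UNIV. lam b)"

definition iet_domain :: "real \<Rightarrow> ('a::{finite,linorder} \<Rightarrow> real) \<Rightarrow> real set" where
  "iet_domain l lam = {l..<iet_right l lam}"

definition iet_interval :: "real \<Rightarrow> ('a::{finite,linorder} \<Rightarrow> real) \<Rightarrow> 'a \<Rightarrow> real set" where
  "iet_interval l lam a = {iet_start l lam a ..< iet_start l lam a + lam a}"

definition iet_transl :: "('a::{finite,linorder} \<Rightarrow> real) \<Rightarrow> ('a \<Rightarrow> 'a) \<Rightarrow> 'a \<Rightarrow> real" where
  "iet_transl lam perm a =
     (\<Sum>b\<in>{b. inv perm b < inv perm a}. lam b) - (\<Sum>b\<in>{b. b < a}. lam b)"

text \<open>The map T; outside I it is (irrelevantly) the identity.\<close>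
definition iet_map :: "real \<Rightarrow> ('a::{finite,linorder} \<Rightarrow> real) \<Rightarrow> ('a \<Rightarrow> 'a) \<Rightarrow> real \<Rightarrow> real" where
  "iet_map l lam perm x =
     (if \<exists>a. x \<in> iet_interval l lam a
      then x + iet_transl lam perm (THE a. x \<in> iet_interval l lam a) else x)"

definition iet_disc :: "real \<Rightarrow> ('a::{finite,linorder} \<Rightarrow> real) \<Rightarrow> real set" where
  "iet_disc l lam = (iet_start l lam ` UNIV) - {l}"

text \<open>Two-sided orbit {T^m x : m \<in> \<int>} of a point x of I (T is a bijection of I).\<close>
definition iet_orbit :: "real \<Rightarrow> ('a::{finite,linorder} \<Rightarrow> real) \<Rightarrow> ('a \<Rightarrow> 'a) \<Rightarrow> real \<Rightarrow> real set" where
  "iet_orbit l lam perm x =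
     {y \<in> iet_domain l lam. \<exists>m::nat. (iet_map l lam perm ^^ m) x = y \<or> (iet_map l lam perm ^^ m) y = x}"

definition iet_regular :: "real \<Rightarrow> ('a::{finite,linorder} \<Rightarrow> real) \<Rightarrow> ('a \<Rightarrow> 'a) \<Rightarrow> bool" where
  "iet_regular l lam perm \<longleftrightarrow>
     (\<forall>d\<in>iet_disc l lam. infinite (iet_orbit l lam perm d)) \<and>
     (\<forall>d\<in>iet_disc l lam. \<forall>d'\<in>iet_disc l lam. d \<noteq> d' \<longrightarrow>
        iet_orbit l lam perm d \<inter> iet_orbit l lam perm d' = {})"

definition iet_traj :: "real \<Rightarrow> ('a::{finite,linorder} \<Rightarrow> real) \<Rightarrow> ('a \<Rightarrow> 'a) \<Rightarrow> real \<Rightarrow> nat \<Rightarrow> 'a" where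
  "iet_traj l lam perm x i = (THE a. (iet_map l lam perm ^^ i) x \<in> iet_interval l lam a)"

definition iet_language :: "real \<Rightarrow> ('a::{finite,linorder} \<Rightarrow> real) \<Rightarrow> ('a \<Rightarrow> 'a) \<Rightarrow> 'a list set" where
  "iet_language l lam perm =
     {w. \<exists>x\<in>iet_domain l lam. \<exists>k. w = map (iet_traj l lam perm x) [k..<k + length w]}"

definition return_words :: "'a list set \<Rightarrow> 'a list \<Rightarrow> 'a list set" where
  "return_words L u =
     {w. w @ u \<in> L \<and> (\<exists>v. w @ u = u @ v) \<and>
         \<not> (\<exists>p s. p \<noteq> [] \<and> s \<noteq> [] \<and> w @ u = p @ u @ s)}"

text \<open>Burrows-Wheeler transform w.r.t. the order of the alphabet (lexicographic order on words).\<close>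
definition bwt :: "'a::linorder list \<Rightarrow> 'a list" where
  "bwt v = map last (sort (map (\<lambda>i. rotate i v) [0..<length v]))"

definition pi_clustering :: "('a::{finite,linorder} \<Rightarrow> 'a) \<Rightarrow> 'a list \<Rightarrow> bool" where
  "pi_clustering perm v \<longleftrightarrow>
     bwt v = concat (map (\<lambda>a. replicate (count_list v (perm a)) (perm a)) (sorted_list_of_set UNIV))"

end

theory Submission
  imports Defs "HOL-Library.Multiset"
begin

(* Let w be a return word of u, so that wu starts with u and contains no other occurrence of u.
   Two distinct rotations of w then first differ at a position that still lies inside wu, so
   they are ordered like two suffixes of the coding of one orbit segment y, T y, ... of T.
   Points whose codings agree up to a first difference are translated together until then, so
   they are ordered like the letters at that difference; and a point of I_a is mapped to the
   left of a point of I_b only if pi^-1 a <= pi^-1 b. Hence the last letters of the sorted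
   rotations, which are the letters just before those suffixes, occur in pi-order: this is
   pi-clustering. *)

lemma sum_lower_set_add_le:
  fixes lam :: "'a::finite \<Rightarrow> real" and f :: "'a \<Rightarrow> 'b::preorder"
  assumes "\<And>c. lam c \<ge> 0" and "insert a {c. f c < f a} \<subseteq> B"
  shows "(\<Sum>c | f c < f a. lam c) + lam a \<le> sum lam B"
proof -
  have "(\<Sum>c | f c < f a. lam c) + lam a = sum lam (insert a {c. f c < f a})"
    by (subst sum.insert) (auto simp: add.commute)
  also have "\<dots> \<le> sum lam B"
    using assms by (intro sum_mono2) auto
  finally show ?thesis .
qed

locale iet =
  fixes l :: real and lam :: "'a::{finite,linorder} \<Rightarrow> real" and perm :: "'a \<Rightarrow> 'a"
  assumes lam_nonneg: "lam a \<ge> 0"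
begin

abbreviation "start \<equiv> iet_start l lam"
abbreviation "interval \<equiv> iet_interval l lam"
abbreviation "domain \<equiv> iet_domain l lam"
abbreviation "T \<equiv> iet_map l lam perm"
abbreviation "traj \<equiv> iet_traj l lam perm"

lemma start_add_le_start: "a < b \<Longrightarrow> start a + lam a \<le> start b"
  using sum_lower_set_add_le[of lam a "\<lambda>c. c" "{c. c < b}"] lam_nonneg
  unfolding iet_start_def by fastforce

lemma interval_unique:
  assumes "x \<in> interval a" and "x \<in> interval b"
  shows "a = b"
  using start_add_le_start[of a b] start_add_le_start[of b a] assms
  unfolding iet_interval_def by (cases a b rule: linorder_cases) auto

lemma the_interval: "x \<in> interval a \<Longrightarrow> (THE b. x \<in> interval b) = a"
  using interval_unique by blast

lemma start_add_eq_sum_atMost: "start a + lam a = l + sum lam {..a}"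
proof -
  have "{..a} = insert a {c. c < a}" by auto
  then show ?thesis unfolding iet_start_def by simp
qed

lemma interval_exists:
  assumes x: "x \<in> domain"
  obtains a where "x \<in> interval a"
proof -
  define a where "a = Max {a. start a \<le> x}"
  obtain a0 :: 'a where "\<And>b. a0 \<le> b"
    using Min_le[OF finite UNIV_I] by blast
  then have "{b. b < a0} = {}"
    using leD by blast
  then have "a0 \<in> {a. start a \<le> x}"
    using x unfolding iet_start_def iet_domain_def by simp
  then have start_a: "start a \<le> x" and a_max: "\<And>b. start b \<le> x \<Longrightarrow> b \<le> a"
    unfolding a_def using Max_in[of "{a. start a \<le> x}"] by auto
  have "x < start a + lam a"
  proof (cases "\<exists>b. a < b")
    case True
    define b where "b = Min {b. a < b}"
    have "a < b" and "\<And>c. a < c \<Longrightarrow> b \<le> c"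
      unfolding b_def using True Min_in[of "{b. a < b}"] by auto
    then have "{c. c < b} = {..a}"
      using not_le by (auto intro: le_less_trans)
    then have "start b = start a + lam a"
      unfolding start_add_eq_sum_atMost unfolding iet_start_def by simp
    then show ?thesis
      using a_max[of b] \<open>a < b\<close> by fastforce
  next
    case False
    then have "{..a} = UNIV" using not_le by auto
    then show ?thesis
      using x unfolding start_add_eq_sum_atMost iet_domain_def iet_right_def by simp
  qed
  with start_a show ?thesis
    using that unfolding iet_interval_def by simp
qed

lemma map_eq: "x \<in> interval a \<Longrightarrow> T x = x + iet_transl lam perm a"
  unfolding iet_map_def using the_interval by auto

lemma map_bounds:
  assumes "x \<in> interval a"
  shows "l + (\<Sum>b | inv perm b < inv perm a. lam b) \<le> T x"
    and "T x < l + (\<Sum>b | inv perm b < inv perm a. lam b) + lam a"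
  using assms map_eq[OF assms]
  unfolding iet_transl_def iet_interval_def iet_start_def by auto

lemma map_domain:
  assumes "x \<in> domain"
  shows "T x \<in> domain"
proof -
  obtain a where a: "x \<in> interval a"
    using interval_exists[OF assms] .
  have "l + (\<Sum>b | inv perm b < inv perm a. lam b) + lam a \<le> iet_right l lam"
    using sum_lower_set_add_le[of lam a "inv perm" UNIV] lam_nonneg
    unfolding iet_right_def by simp
  moreover have "0 \<le> (\<Sum>b | inv perm b < inv perm a. lam b)"
    using lam_nonneg by (simp add: sum_nonneg)
  ultimately show ?thesis
    using map_bounds[OF a] unfolding iet_domain_def by simp
qed

lemma funpow_domain: "x \<in> domain \<Longrightarrow> (T ^^ n) x \<in> domain"
  by (induction n) (simp_all add: map_domain)

lemma traj_in_interval: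
  assumes "x \<in> domain"
  shows "(T ^^ i) x \<in> interval (traj x i)"
proof -
  obtain a where "(T ^^ i) x \<in> interval a"
    using interval_exists[OF funpow_domain[OF assms]] .
  then show ?thesis
    unfolding iet_traj_def by (simp add: the_interval)
qed

lemma traj_funpow: "traj ((T ^^ k) x) i = traj x (k + i)"
  unfolding iet_traj_def by (simp add: funpow_add add.commute)

lemma in_language_obtain_traj:
  assumes "w \<in> iet_language l lam perm"
  obtains y where "y \<in> domain" and "\<And>n. n < length w \<Longrightarrow> w ! n = traj y n"
proof -
  obtain x k where "x \<in> domain" and w: "w = map (traj x) [k..<k + length w]"
    using assms unfolding iet_language_def by blast
  have "w ! n = traj ((T ^^ k) x) n" if "n < length w" for n
    using that by (subst w) (simp add: traj_funpow)
  with \<open>x \<in> domain\<close> funpow_domain that show ?thesis by blast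
qed

lemma traj_lex_less_imp_less:
  assumes x: "x \<in> domain" and x': "x' \<in> domain"
    and same: "\<forall>k<t. traj x k = traj x' k" and less: "traj x t < traj x' t"
  shows "x < x'"
proof -
  have shift: "(T ^^ k) x' - (T ^^ k) x = x' - x" if "k \<le> t" for k
    using that
  proof (induction k)
    case (Suc k)
    then have "(T ^^ k) x' \<in> interval (traj x k)"
      using same traj_in_interval[OF x', of k] by simp
    then show ?case
      using Suc map_eq traj_in_interval[OF x, of k] by simp
  qed simp
  have "(T ^^ t) x < (T ^^ t) x'"
    using traj_in_interval[OF x, of t] traj_in_interval[OF x', of t] start_add_le_start[OF less]
    unfolding iet_interval_def by auto
  with shift[OF order.refl] show ?thesis by simp
qed

lemma map_less_imp_inv_perm_le:
  assumes "x \<in> interval a" and "x' \<in> interval b" and "T x < T x'"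
  shows "inv perm a \<le> inv perm b"
proof (rule ccontr)
  assume "\<not> inv perm a \<le> inv perm b"
  then have "insert b {c. inv perm c < inv perm b} \<subseteq> {c. inv perm c < inv perm a}"
    by auto
  then have "(\<Sum>c | inv perm c < inv perm b. lam c) + lam b \<le> (\<Sum>c | inv perm c < inv perm a. lam c)"
    using sum_lower_set_add_le[of lam b "inv perm"] lam_nonneg by blast
  then show False
    using map_bounds(1)[OF assms(1)] map_bounds(2)[OF assms(2)] assms(3) by linarith
qed

lemma traj_lex_less_imp_inv_perm_le:
  assumes x: "x \<in> domain"
    and same: "\<forall>k<t. traj x (Suc i + k) = traj x (Suc j + k)"
    and less: "traj x (Suc i + t) < traj x (Suc j + t)"
  shows "inv perm (traj x i) \<le> inv perm (traj x j)"
proof (rule map_less_imp_inv_perm_le)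
  show "(T ^^ i) x \<in> interval (traj x i)" "(T ^^ j) x \<in> interval (traj x j)"
    using traj_in_interval[OF x] by blast+
  have "(T ^^ Suc i) x < (T ^^ Suc j) x"
    by (rule traj_lex_less_imp_less[OF funpow_domain[OF x] funpow_domain[OF x]])
      (unfold traj_funpow, fact same, fact less)
  then show "T ((T ^^ i) x) < T ((T ^^ j) x)"
    by simp
qed

end

lemma return_word_nth_mod:
  assumes wu: "w @ u = u @ v" and "w \<noteq> []" and "n < length (w @ u)"
  shows "(w @ u) ! n = w ! (n mod length w)"
  using assms(3)
proof (induction n rule: less_induct)
  case (less n)
  show ?case
  proof (cases "n < length w")
    case True
    then show ?thesis by (simp add: nth_append)
  next
    case False
    moreover have "n - length w < length u"
      using False less.prems by simp
    ultimately have "(w @ u) ! n = (u @ v) ! (n - length w)"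
      by (simp add: nth_append)
    also have "\<dots> = (w @ u) ! (n - length w)"
      by (simp only: wu)
    also have "\<dots> = w ! ((n - length w) mod length w)"
    proof (rule less.IH)
      show "n - length w < n"
        using False \<open>w \<noteq> []\<close> length_greater_0_conv[of w] by linarith
    qed (use less.prems in simp)
    also have "(n - length w) mod length w = n mod length w"
      using False by (simp add: le_mod_geq)
    finally show ?thesis .
  qed
qed

lemma return_word_shifts_differ:
  assumes no_inner: "\<not> (\<exists>p s. p \<noteq> [] \<and> s \<noteq> [] \<and> w @ u = p @ u @ s)"
    and "i \<noteq> j" "1 \<le> i" "1 \<le> j" "i \<le> length w" "j \<le> length w"
  obtains t where "i + t < length (w @ u)" and "j + t < length (w @ u)"
    and "(w @ u) ! (i + t) \<noteq> (w @ u) ! (j + t)"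
proof -
  define z where "z = w @ u"
  txt \<open>If the suffix of \<open>z\<close> at \<open>j\<close> were a prefix of the suffix at \<open>i\<close>, the final
    occurrence of \<open>u\<close> would reappear \<open>j - i\<close> positions earlier, strictly inside \<open>z\<close>.\<close>
  have shifts_differ: "\<exists>t. j + t < length z \<and> z ! (i + t) \<noteq> z ! (j + t)"
    if "1 \<le> i" "i < j" "j \<le> length w" for i j
  proof (rule ccontr)
    assume "\<not> ?thesis"
    moreover have "length w \<le> length z"
      unfolding z_def by simp
    ultimately have "take (length z - j) (drop i z) = drop j z"
      using that by (intro nth_equalityI) auto
    then have "z = take i z @ drop j z @ drop (length z - j) (drop i z)"
      by (metis append_take_drop_id)
    also have "drop j z = drop j w @ u"
      unfolding z_def using that by simp
    finally have "z = (take i z @ drop j w) @ u @ drop (length z - j) (drop i z)"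
      by simp
    moreover have "take i z @ drop j w \<noteq> []" and "drop (length z - j) (drop i z) \<noteq> []"
      using that \<open>length w \<le> length z\<close> by auto
    ultimately show False
      using no_inner unfolding z_def by blast
  qed
  from \<open>i \<noteq> j\<close> consider "i < j" | "j < i"
    by linarith
  then show ?thesis
  proof cases
    case 1
    with shifts_differ[of i j] assms obtain t
      where "j + t < length z" "z ! (i + t) \<noteq> z ! (j + t)" by blast
    with 1 show ?thesis
      by (intro that[folded z_def]) auto
  next
    case 2
    with shifts_differ[of j i] assms obtain t
      where "i + t < length z" "z ! (j + t) \<noteq> z ! (i + t)" by blast
    with 2 show ?thesis
      by (intro that[folded z_def]) auto
  qed
qed

lemma return_word_rotation_less:
  fixes w u :: "'a::linorder list"
  assumes wu: "w @ u = u @ v"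
    and no_inner: "\<not> (\<exists>p s. p \<noteq> [] \<and> s \<noteq> [] \<and> w @ u = p @ u @ s)"
    and ij: "1 \<le> i" "i \<le> length w" "1 \<le> j" "j \<le> length w"
    and less: "rotate i w < rotate j w"
  obtains t where "i + t < length (w @ u)" and "j + t < length (w @ u)"
    and "\<forall>k<t. (w @ u) ! (i + k) = (w @ u) ! (j + k)" and "(w @ u) ! (i + t) < (w @ u) ! (j + t)"
proof -
  let ?z = "w @ u"
  have "w \<noteq> []"
    using ij by auto
  have rotate_nth: "rotate p w ! k = ?z ! (p + k)" if "k < length w" "p + k < length ?z" for p k
    using that return_word_nth_mod[OF wu \<open>w \<noteq> []\<close>] by (simp add: nth_rotate)
  from less obtain t where t: "t < length w" and take_eq: "take t (rotate i w) = take t (rotate j w)"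
    and t_less: "rotate i w ! t < rotate j w ! t"
    unfolding list_less_def lexord_take_index_conv by auto
  have same: "\<forall>k<t. rotate i w ! k = rotate j w ! k"
    using take_eq by (metis nth_take)
  have in_range: "i + t < length ?z \<and> j + t < length ?z"
  proof (rule ccontr)
    assume out: "\<not> ?thesis"
    obtain s where "i + s < length ?z" "j + s < length ?z" "?z ! (i + s) \<noteq> ?z ! (j + s)"
      using return_word_shifts_differ[OF no_inner _ ij(1,3,2,4)] less by blast
    moreover from this out have "s < t" by linarith
    ultimately show False
      using same t rotate_nth[of s i] rotate_nth[of s j] by simp
  qed
  have "\<forall>k<t. ?z ! (i + k) = ?z ! (j + k)"
  proof (intro allI impI)
    fix k assume "k < t"
    then show "?z ! (i + k) = ?z ! (j + k)"
      using same t in_range rotate_nth[of k i] rotate_nth[of k j] by simp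
  qed
  moreover have "?z ! (i + t) < ?z ! (j + t)"
    using t_less t in_range rotate_nth[of t i] rotate_nth[of t j] by simp
  ultimately show ?thesis
    using that in_range by blast
qed

lemma last_rotate:
  assumes "1 \<le> i" and "i \<le> length w"
  shows "last (rotate i w) = w ! (i - 1)"
proof -
  have "w \<noteq> []"
    using assms by auto
  then have "last (rotate i w) = w ! ((i + (length w - 1)) mod length w)"
    by (simp add: last_conv_nth nth_rotate)
  also have "(i + (length w - 1)) mod length w = (i - 1 + length w) mod length w"
    by (rule arg_cong[where f = "\<lambda>n. n mod length w"]) (use assms in simp)
  also have "\<dots> = i - 1"
    by (simp only: mod_add_self2) (use assms in simp)
  finally show ?thesis .
qed

lemma mset_rotate: "mset (rotate n xs) = mset xs"
  by (metis append_take_drop_id mset_append rotate_drop_take union_commute)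

lemma map_last_rotations: "map last (map (\<lambda>i. rotate i w) [0..<length w]) = rotate (length w - 1) w"
proof (rule nth_equalityI)
  fix i assume "i < length (map last (map (\<lambda>i. rotate i w) [0..<length w]))"
  then have "i < length w" and "w \<noteq> []"
    by auto
  then show "map last (map (\<lambda>i. rotate i w) [0..<length w]) ! i = rotate (length w - 1) w ! i"
    by (simp add: last_conv_nth nth_rotate add.commute)
qed simp

lemma mset_bwt: "mset (bwt w) = mset w"
proof -
  have "mset (bwt w) = mset (map last (map (\<lambda>i. rotate i w) [0..<length w]))"
    unfolding bwt_def by (simp only: mset_map mset_sort)
  then show ?thesis
    unfolding map_last_rotations mset_rotate .
qed

lemma sorted_map_bwt:
  fixes key :: "'a::linorder \<Rightarrow> 'b::linorder"
  assumes "\<And>i j. 1 \<le> i \<Longrightarrow> i \<le> length w \<Longrightarrow> 1 \<le> j \<Longrightarrow> j \<le> length w \<Longrightarrow>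
      rotate i w < rotate j w \<Longrightarrow> key (w ! (i - 1)) \<le> key (w ! (j - 1))"
  shows "sorted (map key (bwt w))"
proof -
  let ?S = "sort (map (\<lambda>i. rotate i w) [0..<length w])"
  have rotation: "\<exists>i. 1 \<le> i \<and> i \<le> length w \<and> x = rotate i w" if x: "x \<in> set ?S" for x
  proof -
    obtain p where "p < length w" "x = rotate p w"
      using x by auto
    then show ?thesis
      by (intro exI[of _ "if p = 0 then length w else p"]) auto
  qed
  have "mono_on (set ?S) (key \<circ> last)"
  proof (rule mono_onI)
    fix x y assume "x \<in> set ?S" "y \<in> set ?S" "x \<le> y"
    obtain i j where i: "1 \<le> i" "i \<le> length w" "x = rotate i w"
      and j: "1 \<le> j" "j \<le> length w" "y = rotate j w"
      using rotation \<open>x \<in> set ?S\<close> \<open>y \<in> set ?S\<close> by meson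
    show "(key \<circ> last) x \<le> (key \<circ> last) y"
    proof (cases "x = y")
      case False
      with \<open>x \<le> y\<close> have "rotate i w < rotate j w"
        using i j by simp
      then show ?thesis
        using assms[OF i(1,2) j(1,2)] i j last_rotate[OF i(1,2)] last_rotate[OF j(1,2)] by simp
    qed simp
  qed
  then have "sorted (map (key \<circ> last) ?S)"
    by (rule sorted_map_mono[OF sorted_sort])
  then show ?thesis
    unfolding bwt_def by simp
qed

lemma sorted_concat_replicate:
  "sorted xs \<Longrightarrow> sorted (concat (map (\<lambda>a. replicate (f a) a) xs))"
  by (induction xs) (auto simp: sorted_append)

lemma sort_eq_concat_replicate:
  "sort xs = concat (map (\<lambda>a. replicate (count_list xs a) a) (sorted_list_of_set (UNIV :: 'a::{finite,linorder} set)))"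
proof (rule properties_for_sort)
  show "mset (concat (map (\<lambda>a. replicate (count_list xs a) a) (sorted_list_of_set UNIV))) = mset xs"
    by (simp add: multiset_eq_iff mset_concat sum_list_distinct_conv_sum_set count_sum count_mset)
qed (simp add: sorted_concat_replicate)

lemma pi_clustering_iff_sorted_bwt:
  assumes "bij perm"
  shows "pi_clustering perm v \<longleftrightarrow> sorted (map (inv perm) (bwt v))"
proof -
  have "count_list (map (inv perm) v) a = count_list v (perm a)" for a
    using count_list_map_conv[OF bij_is_inj[OF bij_imp_bij_inv[OF assms]], of v "perm a"]
      inv_f_f[OF bij_is_inj[OF assms]] by simp
  then have "concat (map (\<lambda>a. replicate (count_list v (perm a)) (perm a)) (sorted_list_of_set UNIV))
      = map perm (sort (map (inv perm) v))"
    by (simp add: sort_eq_concat_replicate map_concat comp_def)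
  moreover have "map (inv perm) (map perm xs) = xs" "map perm (map (inv perm) xs) = xs" for xs
    using assms by (simp_all add: comp_def bij_is_inj bij_is_surj surj_f_inv_f)
  ultimately have "pi_clustering perm v \<longleftrightarrow> map (inv perm) (bwt v) = sort (map (inv perm) v)"
    unfolding pi_clustering_def by metis
  also have "\<dots> \<longleftrightarrow> sorted (map (inv perm) (bwt v))"
  proof
    have "mset (map (inv perm) (bwt v)) = mset (map (inv perm) v)"
      by (simp add: mset_bwt)
    then show "sorted (map (inv perm) (bwt v)) \<Longrightarrow> map (inv perm) (bwt v) = sort (map (inv perm) v)"
      by (metis properties_for_sort)
  qed simp
  finally show ?thesis .
qed

theorem lemma6p2:
  fixes l :: real and lam :: "'a::{finite,linorder} \<Rightarrow> real" and perm :: "'a \<Rightarrow> 'a"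
  assumes "\<And>a. lam a > 0"
    and "bij perm"
    and "iet_regular l lam perm"
    and "u \<in> iet_language l lam perm"
    and "w \<in> return_words (iet_language l lam perm) u"
  shows "pi_clustering perm w"
proof -
  interpret iet l lam perm
    using assms(1) by unfold_locales (simp add: less_imp_le)
  obtain v where wu: "w @ u = u @ v" and in_lang: "w @ u \<in> iet_language l lam perm"
    and no_inner: "\<not> (\<exists>p s. p \<noteq> [] \<and> s \<noteq> [] \<and> w @ u = p @ u @ s)"
    using assms(5) unfolding return_words_def by blast
  obtain y where y: "y \<in> domain" and coding: "\<And>n. n < length (w @ u) \<Longrightarrow> (w @ u) ! n = traj y n"
    using in_language_obtain_traj[OF in_lang] by blast
  have letter: "w ! n = traj y n" if "n < length w" for n
    using coding[of n] that by (simp add: nth_append)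
  have "sorted (map (inv perm) (bwt w))"
  proof (rule sorted_map_bwt)
    fix i j assume ij: "1 \<le> i" "i \<le> length w" "1 \<le> j" "j \<le> length w"
      and "rotate i w < rotate j w"
    then obtain t where "i + t < length (w @ u)" "j + t < length (w @ u)"
      and "\<forall>k<t. (w @ u) ! (i + k) = (w @ u) ! (j + k)" and "(w @ u) ! (i + t) < (w @ u) ! (j + t)"
      using return_word_rotation_less[OF wu no_inner] by blast
    then have "inv perm (traj y (i - 1)) \<le> inv perm (traj y (j - 1))"
      using traj_lex_less_imp_inv_perm_le[OF y, of t "i - 1" "j - 1"] coding ij by simp
    then show "inv perm (w ! (i - 1)) \<le> inv perm (w ! (j - 1))"
      using letter[of "i - 1"] letter[of "j - 1"] ij by simp
  qed
  then show ?thesis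
    using pi_clustering_iff_sorted_bwt[OF assms(2)] by blast
qed

end
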